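(* If $X$ is an infinite set, then the preorder $\mathbf{U}(X)$ has no Heyting negation: there exists $\beta\in\mathbf{U}(X)$ such that for every $\alpha\in\mathbf{U}(X)$ there is $\gamma\in\mathbf{U}(X)$ for which the equivalence $\gamma\wedge\beta\sqsubseteq\bot\iff\gamma\sqsubseteq\alpha$ fails. Consequently $\mathbf{U}(X)$ also has no Heyting implication.
   Context: For functions $\alpha,\beta:X\to[0,1]$ on a set $X$, write $\alpha\sqsubseteq\beta$ if for every $\varepsilon>0$ there exists $\delta>0$ such that for all $x\in X$, $\alpha(x)\le\delta$ implies $\beta(x)\le\varepsilon$. $\mathbf{U}(X)$ is the preorder of all functions $X\to[0,1]$ ordered by $\sqsubseteq$. In it the meet $\gamma\wedge\beta$ is the pointwise maximum, the top is the constant $0$ function, and $\bot$ denotes the bottom element (e.g. the constant function $1$; any function with positive infimum is isomorphic to it). *)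

theory Defs
  imports Main "HOL.Real"
begin

text \<open>The carrier of U(X): functions X -> [0,1], with X the universe of type 'a.\<close>
definition UX :: "('a \<Rightarrow> real) set" where
  "UX = {f. \<forall>x. 0 \<le> f x \<and> f x \<le> 1}"

definition ule :: "('a \<Rightarrow> real) \<Rightarrow> ('a \<Rightarrow> real) \<Rightarrow> bool" where
  "ule \<alpha> \<beta> \<longleftrightarrow> (\<forall>\<epsilon>>0. \<exists>\<delta>>0. \<forall>x. \<alpha> x \<le> \<delta> \<longrightarrow> \<beta> x \<le> \<epsilon>)"

definition umeet :: "('a \<Rightarrow> real) \<Rightarrow> ('a \<Rightarrow> real) \<Rightarrow> ('a \<Rightarrow> real)" where
  "umeet \<gamma> \<beta> = (\<lambda>x. max (\<gamma> x) (\<beta> x))"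

definition ubot :: "'a \<Rightarrow> real" where
  "ubot = (\<lambda>x. 1)"

end

theory Submission
  imports Defs
begin

text \<open>A function lies below the bottom exactly when it is bounded away from 0. Take \<beta>
  everywhere positive but with infimum 0 (possible as X is infinite), and suppose \<alpha> were
  its negation. Each point indicator \<gamma>, vanishing at x and equal to 1 elsewhere, meets \<beta>
  in a function bounded below by min 1 (\<beta> x), so \<gamma> \<sqsubseteq> \<alpha> and hence \<alpha> x = 0. Thus
  \<alpha> vanishes identically, the top 0 lies below \<alpha>, and so 0 \<and> \<beta> = \<beta> would be below the
  bottom, contradicting inf \<beta> = 0. Taking the bottom itself as the second argument, the
  same \<beta> shows that there is no Heyting implication either.\<close>

lemma ule_ubot_iff: "ule g ubot \<longleftrightarrow> (\<exists>c>0. \<forall>x. c \<le> g x)"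
proof
  assume "ule g ubot"
  then obtain d where "d > 0" and d: "\<And>x. g x \<le> d \<Longrightarrow> (1::real) \<le> 1/2"
    unfolding ule_def ubot_def by (meson half_gt_zero zero_less_one)
  have "d \<le> g x" for x
    using d[of x] by fastforce
  with \<open>d > 0\<close> show "\<exists>c>0. \<forall>x. c \<le> g x" by blast
next
  assume "\<exists>c>0. \<forall>x. c \<le> g x"
  then obtain c where "c > 0" and c: "\<And>x. c \<le> g x" by blast
  have "\<not> g x \<le> c/2" for x
    using c[of x] \<open>c > 0\<close> by linarith
  then show "ule g ubot"
    unfolding ule_def ubot_def using \<open>c > 0\<close> half_gt_zero by blast
qed

lemma ule_vanishing_point:
  assumes "ule \<gamma> \<alpha>" and "\<gamma> x \<le> 0"
  shows "\<alpha> x \<le> 0"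
proof (rule field_le_epsilon)
  fix e :: real assume "0 < e"
  with assms(1) obtain d where "d > 0" "\<And>y. \<gamma> y \<le> d \<Longrightarrow> \<alpha> y \<le> e"
    unfolding ule_def by blast
  with assms(2) show "\<alpha> x \<le> 0 + e" by simp
qed

lemma ule_const_zero: "(\<And>x. \<alpha> x \<le> 0) \<Longrightarrow> ule (\<lambda>_. 0) \<alpha>"
  unfolding ule_def by (meson order.trans less_imp_le zero_less_one)

lemma umeet_const_zero: "(\<And>x. 0 \<le> \<beta> x) \<Longrightarrow> umeet (\<lambda>_. 0) \<beta> = \<beta>"
  unfolding umeet_def by (simp add: max_absorb2)

lemma ubot_in_UX: "ubot \<in> UX"
  unfolding UX_def ubot_def by simp

lemma no_pseudocomplement:
  assumes pos: "\<And>x. 0 < \<beta> x" and unbounded: "\<not> ule \<beta> ubot"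
  shows "\<exists>\<gamma>\<in>UX. \<not> (ule (umeet \<gamma> \<beta>) ubot \<longleftrightarrow> ule \<gamma> \<alpha>)"
proof (rule ccontr)
  assume "\<not> ?thesis"
  then have neg: "ule (umeet \<gamma> \<beta>) ubot \<longleftrightarrow> ule \<gamma> \<alpha>" if "\<gamma> \<in> UX" for \<gamma>
    using that by blast
  have "\<alpha> x \<le> 0" for x
  proof -
    define \<gamma> :: "'a \<Rightarrow> real" where "\<gamma> y = (if y = x then 0 else 1)" for y
    have "\<gamma> \<in> UX" unfolding UX_def \<gamma>_def by simp
    moreover have "\<forall>y. min 1 (\<beta> x) \<le> umeet \<gamma> \<beta> y"
      unfolding umeet_def \<gamma>_def by auto
    then have "ule (umeet \<gamma> \<beta>) ubot"
      unfolding ule_ubot_iff using pos by (meson min_less_iff_conj zero_less_one)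
    ultimately have "ule \<gamma> \<alpha>" using neg by blast
    then show "\<alpha> x \<le> 0" by (rule ule_vanishing_point) (simp add: \<gamma>_def)
  qed
  then have "ule (umeet (\<lambda>_. 0) \<beta>) ubot"
    using neg[of "\<lambda>_. 0"] ule_const_zero by (auto simp: UX_def)
  with unbounded show False
    using pos by (simp add: umeet_const_zero less_imp_le)
qed

lemma infinite_imp_positive_not_below_ubot:
  assumes "infinite (UNIV :: 'a set)"
  obtains \<beta> :: "'a \<Rightarrow> real" where "\<beta> \<in> UX" "\<And>x. 0 < \<beta> x" "\<not> ule \<beta> ubot"
proof -
  obtain f :: "nat \<Rightarrow> 'a" where "inj f"
    using assms infinite_countable_subset by blast
  define \<beta> :: "'a \<Rightarrow> real"
    where "\<beta> y = (if y \<in> range f then inverse (real (Suc (inv f y))) else 1)" for y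
  have "\<beta> \<in> UX" and pos: "\<And>x. 0 < \<beta> x"
    unfolding UX_def \<beta>_def by (auto simp: inverse_le_1_iff)
  have \<beta>_f: "\<beta> (f n) = inverse (real (Suc n))" for n
    unfolding \<beta>_def using \<open>inj f\<close> by simp
  have "\<not> ule \<beta> ubot"
    unfolding ule_ubot_iff
  proof (intro notI, elim exE conjE)
    fix c :: real assume "0 < c" "\<forall>x. c \<le> \<beta> x"
    moreover obtain n where "inverse (real (Suc n)) < c"
      using reals_Archimedean[OF \<open>0 < c\<close>] by blast
    ultimately show False
      using \<beta>_f[of n] by (metis not_le)
  qed
  with \<open>\<beta> \<in> UX\<close> pos show thesis by (rule that)
qed

theorem mainTheorem4:
  assumes "infinite (UNIV :: 'a set)"
  shows "(\<exists>\<beta>::'a \<Rightarrow> real. \<beta> \<in> UX \<and>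
            (\<forall>\<alpha>\<in>UX. \<exists>\<gamma>\<in>UX. \<not> (ule (umeet \<gamma> \<beta>) ubot \<longleftrightarrow> ule \<gamma> \<alpha>)))
       \<and> (\<exists>\<beta>::'a \<Rightarrow> real. \<exists>\<alpha>. \<beta> \<in> UX \<and> \<alpha> \<in> UX \<and>
            (\<forall>\<delta>\<in>UX. \<exists>\<gamma>\<in>UX. \<not> (ule (umeet \<gamma> \<beta>) \<alpha> \<longleftrightarrow> ule \<gamma> \<delta>)))"
proof -
  obtain \<beta> :: "'a \<Rightarrow> real" where "\<beta> \<in> UX" "\<And>x. 0 < \<beta> x" "\<not> ule \<beta> ubot"
    using infinite_imp_positive_not_below_ubot[OF assms] by blast
  then have "\<forall>\<alpha>\<in>UX. \<exists>\<gamma>\<in>UX. \<not> (ule (umeet \<gamma> \<beta>) ubot \<longleftrightarrow> ule \<gamma> \<alpha>)"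
    using no_pseudocomplement by blast
  with \<open>\<beta> \<in> UX\<close> ubot_in_UX show ?thesis by blast
qed

end
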